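(* Let $n\ge 3$ and $k\ge 1$. Let $G=C_n$ be the cycle $g_1g_2\cdots g_ng_1$ and let $H=C_{3k+1}$ have vertex set $\{1,2,\dots,3k+1\}$ with $i$ adjacent to $i+1$ for $1\le i\le 3k$ and $3k+1$ adjacent to $1$. Define $f\colon V(G)\to V(H)$ by $f(g_i)=1$ if $i\bmod 4\in\{1,2\}$ and $f(g_i)=3$ otherwise ($i\in\{1,\dots,n\}$). Then \[ \gamma(G\otimes_f H)\le kn+\left\lceil \frac n4\right\rceil-\left\lfloor \frac n4\right\rfloor . \]
   Context: $\gamma$ denotes the domination number. For graphs $G,H$ and a function $f\colon V(G)\to V(H)$, the Sierpiński product $G\otimes_f H$ is the graph with vertex set $V(G)\times V(H)$ and edges of two types: (type 1) $(g,h)(g,h')$ for every $g\in V(G)$ and every edge $hh'\in E(H)$; (type 2) $(g,f(g'))(g',f(g))$ for every edge $gg'\in E(G)$. *)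

theory Defs
  imports Complex_Main
begin

text \<open>A simple graph is given by a vertex set V and a symmetric, irreflexive
adjacency predicate E (only its values on V x V matter).\<close>

definition dominating_set :: "'a set \<Rightarrow> ('a \<Rightarrow> 'a \<Rightarrow> bool) \<Rightarrow> 'a set \<Rightarrow> bool" where
  "dominating_set V E D \<longleftrightarrow> D \<subseteq> V \<and> (\<forall>v\<in>V. v \<in> D \<or> (\<exists>u\<in>D. E u v))"

definition domination_number :: "'a set \<Rightarrow> ('a \<Rightarrow> 'a \<Rightarrow> bool) \<Rightarrow> nat" where
  "domination_number V E = Min (card ` {D. dominating_set V E D})"

definition sierpinski_verts :: "'a set \<Rightarrow> 'b set \<Rightarrow> ('a \<times> 'b) set" where
  "sierpinski_verts VG VH = VG \<times> VH"

definition sierpinski_edge ::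
  "'a set \<Rightarrow> ('a \<Rightarrow> 'a \<Rightarrow> bool) \<Rightarrow> 'b set \<Rightarrow> ('b \<Rightarrow> 'b \<Rightarrow> bool) \<Rightarrow> ('a \<Rightarrow> 'b)
     \<Rightarrow> ('a \<times> 'b) \<Rightarrow> ('a \<times> 'b) \<Rightarrow> bool" where
  "sierpinski_edge VG EG VH EH f x y \<longleftrightarrow>
     (fst x = fst y \<and> fst x \<in> VG \<and> snd x \<in> VH \<and> snd y \<in> VH \<and> EH (snd x) (snd y)) \<or>
     (\<exists>g\<in>VG. \<exists>g'\<in>VG. EG g g' \<and> x = (g, f g') \<and> y = (g', f g))"

definition cycle_verts :: "nat \<Rightarrow> nat set" where
  "cycle_verts m = {1..m}"

definition cycle_adj :: "nat \<Rightarrow> nat \<Rightarrow> nat \<Rightarrow> bool" where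
  "cycle_adj m i j \<longleftrightarrow> i \<in> {1..m} \<and> j \<in> {1..m} \<and>
     (j = i + 1 \<or> i = j + 1 \<or> (i = m \<and> j = 1) \<or> (i = 1 \<and> j = m)) \<and> i \<noteq> j"

end

(*
  In C_{3k+1} the k vertices v+2, v+5, ..., v+3k-1 dominate every vertex except v.  Put such a
  set into each fibre g_i of the Sierpinski product, with hole v = f(g_{i-1}).  The hole
  (g_i, f(g_{i-1})) is the end of the bridge edge from (g_{i-1}, f(g_i)), and f(g_i) lies in the
  set of fibre i-1 because f(g_i) = f(g_{i-2}) +- 2: f alternates between 1 and 3 in pairs.
  Only the bridge from g_n back to g_1 can fail, namely when 4 does not divide n; then the
  hole of fibre 1 is added to the set, at the cost of one vertex.
*)

theory Submission
  imports Defs "HOL-Number_Theory.Cong"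
begin

lemma cycle_adj_iff_cong:
  assumes "3 \<le> m" "i \<in> {1..m}" "j \<in> {1..m}"
  shows "cycle_adj m i j \<longleftrightarrow> [i + 1 = j] (mod m) \<or> [j + 1 = i] (mod m)"
  using assms unfolding cycle_adj_def cong_def by (auto simp: mod_if)

lemma cycle_vertex_eq_if_cong:
  fixes i j m :: nat
  assumes "[i = j] (mod m)" "i \<in> {1..m}" "j \<in> {1..m}"
  shows "i = j"
proof -
  have "x mod m = (if x = m then 0 else x)" if "x \<in> {1..m}" for x
    using that by auto
  then show ?thesis using assms unfolding cong_def by (smt (verit) atLeastAtMost_iff not_one_le_zero)
qed

text \<open>The vertices v + 2, v + 5, \<dots>, v + 3k - 1 of C_{3k+1}, reduced to labels in {1..3k+1}.\<close>
definition cycle_dom_except :: "nat \<Rightarrow> nat \<Rightarrow> nat set" where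
  "cycle_dom_except k v = (\<lambda>j. (v + 3 * j + 1) mod (3 * k + 1) + 1) ` {..<k}"

lemma finite_cycle_dom_except: "finite (cycle_dom_except k v)"
  by (simp add: cycle_dom_except_def)

lemma card_cycle_dom_except: "card (cycle_dom_except k v) = k"
proof -
  have "inj_on (\<lambda>j. (v + 3 * j + 1) mod (3 * k + 1) + 1) {..<k}"
  proof (rule inj_onI)
    fix i j assume "i \<in> {..<k}" "j \<in> {..<k}"
      and "(v + 3 * i + 1) mod (3 * k + 1) + 1 = (v + 3 * j + 1) mod (3 * k + 1) + 1"
    then have "[(v + 1) + 3 * i = (v + 1) + 3 * j] (mod 3 * k + 1)" "3 * i < 3 * k + 1" "3 * j < 3 * k + 1"
      by (simp_all add: cong_def ac_simps)
    then show "i = j"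
      by (metis cong_add_lcancel_nat cong_less_modulus_unique_nat mult_left_cancel zero_neq_numeral)
  qed
  then show ?thesis by (simp add: cycle_dom_except_def card_image)
qed

lemma cycle_dom_except_subset: "cycle_dom_except k v \<subseteq> cycle_verts (3 * k + 1)"
  by (auto simp: cycle_dom_except_def cycle_verts_def)

lemma cycle_dom_except_dominates:
  assumes "1 \<le> k" "v \<in> cycle_verts (3 * k + 1)" "h \<in> cycle_verts (3 * k + 1)" "h \<noteq> v"
  shows "\<exists>s\<in>cycle_dom_except k v. s = h \<or> cycle_adj (3 * k + 1) s h"
proof -
  define m where "m = 3 * k + 1"
  define d where "d = (h + m - v) mod m"
  define j where "j = (d - 1) div 3"
  define s where "s = (v + 3 * j + 1) mod m + 1"
  have v: "v \<in> {1..m}" and h: "h \<in> {1..m}" and s: "s \<in> {1..m}"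
    using assms(2,3) by (auto simp: m_def cycle_verts_def s_def)
  have "v + (h + m - v) = h + m" using v by simp
  then have hd: "[h = v + d] (mod m)"
    unfolding d_def cong_def by (metis mod_add_right_eq mod_add_self2)
  have "d \<noteq> 0"
  proof
    assume "d = 0"
    with hd have "[h = v] (mod m)" by simp
    with v h assms(4) show False using cycle_vertex_eq_if_cong by blast
  qed
  have "d < m" unfolding d_def m_def by simp
  then have "j < k" using assms(1) unfolding j_def m_def by presburger
  then have s_mem: "s \<in> cycle_dom_except k v" by (auto simp: s_def m_def cycle_dom_except_def)
  have hs: "[v + 3 * j + 2 = s] (mod m)" by (simp add: s_def cong_def mod_Suc)
  have adj: "cycle_adj m s h \<longleftrightarrow> [s + 1 = h] (mod m) \<or> [h + 1 = s] (mod m)"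
    using assms(1) s h by (intro cycle_adj_iff_cong) (auto simp: m_def)
  consider "d = 3 * j + 1" | "d = 3 * j + 2" | "d = 3 * j + 3"
    using \<open>d \<noteq> 0\<close> unfolding j_def by linarith
  then have "s = h \<or> cycle_adj m s h"
  proof cases
    case 1
    have "[h + 1 = v + d + 1] (mod m)" by (rule cong_add[OF hd cong_refl])
    also have "v + d + 1 = v + 3 * j + 2" using 1 by simp
    finally have "[h + 1 = v + 3 * j + 2] (mod m)" .
    with hs show ?thesis unfolding adj using cong_trans by blast
  next
    case 2
    with hd have "[h = s] (mod m)" using hs cong_trans by auto
    with h s show ?thesis using cycle_vertex_eq_if_cong by blast
  next
    case 3
    have "[s + 1 = v + 3 * j + 2 + 1] (mod m)" by (rule cong_add[OF cong_sym[OF hs] cong_refl])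
    also have "v + 3 * j + 2 + 1 = v + d" using 3 by simp
    finally have "[s + 1 = v + d] (mod m)" .
    with hd show ?thesis unfolding adj by (metis cong_sym cong_trans)
  qed
  with s_mem show ?thesis unfolding m_def by blast
qed

lemma cycle_dom_except_contains_next2:
  assumes "1 \<le> k" "v + 2 \<le> 3 * k + 1" shows "v + 2 \<in> cycle_dom_except k v"
proof -
  have "(v + 3 * 0 + 1) mod (3 * k + 1) + 1 = v + 2" using assms(2) by simp
  then show ?thesis using assms(1) unfolding cycle_dom_except_def by (intro image_eqI[of _ _ 0]) auto
qed

lemma cycle_dom_except_contains_prev2:
  assumes "1 \<le> k" "3 \<le> v" "v \<le> 3 * k + 1" shows "v - 2 \<in> cycle_dom_except k v"
proof -
  have "v + 3 * (k - 1) + 1 = (v - 3) + (3 * k + 1)" using assms by simp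
  then have "(v + 3 * (k - 1) + 1) mod (3 * k + 1) = (v - 3) mod (3 * k + 1)"
    by (simp only: mod_add_self2)
  also have "\<dots> = v - 3" using assms(3) by simp
  finally have "(v + 3 * (k - 1) + 1) mod (3 * k + 1) + 1 = v - 2" using assms(2) by simp
  then show ?thesis using assms(1) unfolding cycle_dom_except_def by (intro image_eqI[of _ _ "k - 1"]) auto
qed

lemma sierpinski_edge_fibre:
  assumes "g \<in> VG" "h \<in> VH" "h' \<in> VH" "EH h h'"
  shows "sierpinski_edge VG EG VH EH f (g, h) (g, h')"
  using assms by (simp add: sierpinski_edge_def)

lemma sierpinski_edge_bridge:
  assumes "g \<in> VG" "g' \<in> VG" "EG g g'"
  shows "sierpinski_edge VG EG VH EH f (g, f g') (g', f g)"
  using assms unfolding sierpinski_edge_def by blast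

lemma domination_number_le_card:
  assumes "finite V" "dominating_set V E D"
  shows "domination_number V E \<le> card D"
proof -
  have "{D. dominating_set V E D} \<subseteq> Pow V" by (auto simp: dominating_set_def)
  then have "finite (card ` {D. dominating_set V E D})" using assms(1) by (auto intro: finite_subset)
  then show ?thesis unfolding domination_number_def using assms(2) by (intro Min_le) auto
qed

lemma ceiling_minus_floor:
  fixes x :: "'a :: floor_ceiling"
  shows "\<lceil>x\<rceil> - \<lfloor>x\<rfloor> = (if x \<in> \<int> then 0 else 1)"
  by (auto simp: ceiling_altdef elim: Ints_cases) (metis Ints_of_int)

lemma ceiling_minus_floor_quarter:
  "\<lceil>real n / 4\<rceil> - \<lfloor>real n / 4\<rfloor> = (if 4 dvd n then 0 else 1)"
  using ceiling_minus_floor[of "real n / 4"] of_int_div_of_int_in_Ints_iff[of "int n" 4, where 'a=real]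
  by (simp add: int_dvd_int_iff[of 4 n, simplified])

text \<open>Fibre i has its hole at f (i - 1).  For i = 1 this is f 0, a free parameter: the bridge
  from fibre n covers (1, f 0) only if f n = f 0.\<close>
lemma sierpinski_cycle_dominating_set:
  fixes f :: "nat \<Rightarrow> 'b" and S :: "nat \<Rightarrow> 'b set"
  assumes "2 \<le> n"
    and S_sub: "\<And>i. i \<in> {1..n} \<Longrightarrow> S i \<subseteq> VH"
    and S_dom: "\<And>i h. i \<in> {1..n} \<Longrightarrow> h \<in> VH \<Longrightarrow> h \<noteq> f (i - 1) \<Longrightarrow> \<exists>s\<in>S i. s = h \<or> EH s h"
    and S_link: "\<And>i. i \<in> {2..n} \<Longrightarrow> f i \<in> S (i - 1)"
    and D_sub: "Sigma {1..n} S \<subseteq> D" "D \<subseteq> sierpinski_verts (cycle_verts n) VH"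
    and wrap: "(1, f 0) \<in> D \<or> (f n = f 0 \<and> f 1 \<in> S n)"
  shows "dominating_set (sierpinski_verts (cycle_verts n) VH)
           (sierpinski_edge (cycle_verts n) (cycle_adj n) VH EH f) D"
  unfolding dominating_set_def
proof (intro conjI D_sub ballI)
  let ?E = "sierpinski_edge (cycle_verts n) (cycle_adj n) VH EH f"
  fix x assume "x \<in> sierpinski_verts (cycle_verts n) VH"
  then obtain i h where x: "x = (i, h)" and i: "i \<in> {1..n}" and h: "h \<in> VH"
    by (auto simp: sierpinski_verts_def cycle_verts_def)
  consider "h \<noteq> f (i - 1)" | "h = f (i - 1)" "2 \<le> i" | "h = f 0" "i = 1"
    using i by fastforce
  then show "x \<in> D \<or> (\<exists>u\<in>D. ?E u x)"
  proof cases
    case 1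
    then obtain s where "s \<in> S i" "s = h \<or> EH s h" using S_dom i h by blast
    moreover have "(i, s) \<in> D" "s \<in> VH" using \<open>s \<in> S i\<close> i S_sub D_sub(1) by auto
    ultimately show ?thesis
      using i h x sierpinski_edge_fibre[of i "cycle_verts n" s VH h EH "cycle_adj n" f]
      by (auto simp: cycle_verts_def)
  next
    case 2
    then have "i - 1 \<in> {1..n}" "f i \<in> S (i - 1)" using S_link i by auto
    then have "(i - 1, f i) \<in> D" using D_sub(1) by blast
    moreover have "?E (i - 1, f i) (i, f (i - 1))"
      using 2 i by (intro sierpinski_edge_bridge) (auto simp: cycle_verts_def cycle_adj_def)
    ultimately show ?thesis using 2 x by blast
  next
    case 3
    show ?thesis
    proof (cases "(1, f 0) \<in> D")
      case False
      with wrap have "(n, f 1) \<in> D" "f n = f 0" using D_sub(1) \<open>2 \<le> n\<close> by auto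
      moreover have "?E (n, f 1) (1, f n)"
        using \<open>2 \<le> n\<close> by (intro sierpinski_edge_bridge) (auto simp: cycle_verts_def cycle_adj_def)
      ultimately show ?thesis using 3 x by auto
    qed (use 3 x in simp)
  qed
qed

definition pair_pattern :: "nat \<Rightarrow> nat" where
  "pair_pattern i = (if i mod 4 \<in> {1, 2} then 1 else 3)"

lemma pair_pattern_cases: "pair_pattern i = 1 \<or> pair_pattern i = 3"
  by (simp add: pair_pattern_def)

lemma pair_pattern_add2: "pair_pattern (i + 2) = 4 - pair_pattern i"
proof -
  have "(i + 2) mod 4 = (i mod 4 + 2) mod 4" by (rule mod_add_left_eq [symmetric])
  moreover have "i mod 4 \<in> {0, 1, 2, 3}" by auto
  ultimately show ?thesis by (auto simp: pair_pattern_def)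
qed

lemma pair_pattern_at_multiple_of_4:
  assumes "4 dvd n" "0 < n"
  shows "pair_pattern n = 3" "pair_pattern (n - 1) = 3"
proof -
  obtain q where q: "n = 4 * q" using assms(1) by (rule dvdE)
  with assms(2) have "n - 1 = 4 * (q - 1) + 3" by simp
  then show "pair_pattern n = 3" "pair_pattern (n - 1) = 3" using q by (simp_all add: pair_pattern_def)
qed

lemma pair_pattern_add2_in_cycle_dom_except:
  assumes "1 \<le> k"
  shows "pair_pattern (i + 2) \<in> cycle_dom_except k (pair_pattern i)"
proof -
  have "3 \<in> cycle_dom_except k 1" "1 \<in> cycle_dom_except k 3"
    using cycle_dom_except_contains_next2[OF assms, of 1]
      cycle_dom_except_contains_prev2[OF assms, of 3] assms by (simp_all add: numeral_3_eq_3)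
  with pair_pattern_cases[of i] show ?thesis unfolding pair_pattern_add2 by auto
qed

lemma sierpinski_cycle_pair_pattern_dominating_set:
  assumes "3 \<le> n" "1 \<le> k"
  defines "D \<equiv> Sigma {1..n} (\<lambda>i. cycle_dom_except k (pair_pattern (i - 1)))
                \<union> (if 4 dvd n then {} else {(1, 3)})"
  shows "dominating_set (sierpinski_verts (cycle_verts n) (cycle_verts (3 * k + 1)))
           (sierpinski_edge (cycle_verts n) (cycle_adj n)
              (cycle_verts (3 * k + 1)) (cycle_adj (3 * k + 1)) pair_pattern) D"
proof (rule sierpinski_cycle_dominating_set)
  show "2 \<le> n" using assms(1) by simp
  show "cycle_dom_except k (pair_pattern (i - 1)) \<subseteq> cycle_verts (3 * k + 1)" for i
    by (rule cycle_dom_except_subset)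
  have "pair_pattern i \<in> cycle_verts (3 * k + 1)" for i
    using pair_pattern_cases[of i] assms(2) by (auto simp: cycle_verts_def)
  then show "\<exists>s\<in>cycle_dom_except k (pair_pattern (i - 1)). s = h \<or> cycle_adj (3 * k + 1) s h"
    if "h \<in> cycle_verts (3 * k + 1)" "h \<noteq> pair_pattern (i - 1)" for i h
    using cycle_dom_except_dominates[OF assms(2) _ that] by blast
  show "pair_pattern i \<in> cycle_dom_except k (pair_pattern (i - 1 - 1))" if "i \<in> {2..n}" for i
    using pair_pattern_add2_in_cycle_dom_except[OF assms(2), of "i - 2"] that
    by (simp add: numeral_2_eq_2 Suc_diff_Suc)
  show "Sigma {1..n} (\<lambda>i. cycle_dom_except k (pair_pattern (i - 1))) \<subseteq> D"
    unfolding D_def by blast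
  have "Sigma {1..n} (\<lambda>i. cycle_dom_except k (pair_pattern (i - 1)))
          \<subseteq> sierpinski_verts (cycle_verts n) (cycle_verts (3 * k + 1))"
    using cycle_dom_except_subset by (fastforce simp: sierpinski_verts_def cycle_verts_def)
  then show "D \<subseteq> sierpinski_verts (cycle_verts n) (cycle_verts (3 * k + 1))"
    using assms(1,2) by (simp add: D_def sierpinski_verts_def cycle_verts_def)
  have "pair_pattern 0 = 3" "pair_pattern 1 = pair_pattern 2"
    by (simp_all add: pair_pattern_def)
  moreover have "pair_pattern 2 \<in> cycle_dom_except k (pair_pattern 0)"
    using pair_pattern_add2_in_cycle_dom_except[OF assms(2), of 0] by (simp add: numeral_2_eq_2)
  ultimately show "(1, pair_pattern 0) \<in> D \<or> pair_pattern n = pair_pattern 0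
      \<and> pair_pattern 1 \<in> cycle_dom_except k (pair_pattern (n - 1))"
    using assms(1) pair_pattern_at_multiple_of_4[of n] by (auto simp: D_def)
qed

theorem mainTheorem9:
  fixes n k :: nat and f :: "nat \<Rightarrow> nat"
  assumes "n \<ge> 3" and "k \<ge> 1"
    and "\<And>i. f i = (if i mod 4 \<in> {1, 2} then 1 else 3)"
  shows "int (domination_number
            (sierpinski_verts (cycle_verts n) (cycle_verts (3 * k + 1)))
            (sierpinski_edge (cycle_verts n) (cycle_adj n)
                             (cycle_verts (3 * k + 1)) (cycle_adj (3 * k + 1)) f))
         \<le> int (k * n) + \<lceil>real n / 4\<rceil> - \<lfloor>real n / 4\<rfloor>"
proof -
  let ?V = "sierpinski_verts (cycle_verts n) (cycle_verts (3 * k + 1))"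
  let ?E = "sierpinski_edge (cycle_verts n) (cycle_adj n)
              (cycle_verts (3 * k + 1)) (cycle_adj (3 * k + 1)) f"
  let ?D = "Sigma {1..n} (\<lambda>i. cycle_dom_except k (pair_pattern (i - 1)))"
  let ?c = "if 4 dvd n then 0 else 1 :: nat"
  have "f = pair_pattern" using assms(3) by (simp add: pair_pattern_def fun_eq_iff)
  then have "dominating_set ?V ?E (?D \<union> (if 4 dvd n then {} else {(1, 3)}))"
    using sierpinski_cycle_pair_pattern_dominating_set[OF assms(1,2)] by simp
  then have "domination_number ?V ?E \<le> card (?D \<union> (if 4 dvd n then {} else {(1, 3)}))"
    by (rule domination_number_le_card[rotated]) (simp add: sierpinski_verts_def cycle_verts_def)
  also have "\<dots> \<le> card ?D + ?c"
    using card_Un_le[of ?D "if 4 dvd n then {} else {(1, 3)}"] by (simp split: if_splits)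
  also have "card ?D = k * n"
    by (simp add: card_cycle_dom_except finite_cycle_dom_except)
  finally have "int (domination_number ?V ?E) \<le> int (k * n) + int ?c"
    by (simp only: of_nat_add [symmetric] of_nat_le_iff)
  moreover have "int ?c = \<lceil>real n / 4\<rceil> - \<lfloor>real n / 4\<rfloor>"
    by (simp add: ceiling_minus_floor_quarter)
  ultimately show ?thesis by (simp only: add_diff_eq)
qed

end
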